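(* Define $\alpha,\beta:[0,2\pi]\to\mathbb{R}^3$ and $\gamma:[0,\pi]\to\mathbb{R}^3$ by $\alpha(t)=(\cos t,\sin t,1)$, $\beta(t)=(\cos t,\sin t,-1)$, $\gamma(t)=\big(2\cos(2t)-1,\ 2\sin(2t),\ \tfrac98\cos t-\tfrac18\cos(3t)\big)$, and let $C=\operatorname{conv}\big(\alpha([0,2\pi])\cup\beta([0,2\pi])\cup\gamma([0,\pi])\big)$. Then the only two-dimensional faces of $C$ are the disks $F_\alpha=\operatorname{conv}\alpha([0,2\pi])$ and $F_\beta=\operatorname{conv}\beta([0,2\pi])$, and these faces are exposed.
   Context: A face of a closed convex set $C$ is a closed convex subset $F\subseteq C$ such that whenever $x,y\in C$ and $\lambda x+(1-\lambda)y\in F$ for some $\lambda\in(0,1)$, then $x,y\in F$. A face $F$ is exposed if $F=C\cap H$ for some supporting hyperplane $H$ of $C$. *)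

theory Defs
  imports "HOL-Analysis.Analysis"
begin

definition curve_alpha :: "real \<Rightarrow> real^3" where
  "curve_alpha t = vector [cos t, sin t, 1]"

definition curve_beta :: "real \<Rightarrow> real^3" where
  "curve_beta t = vector [cos t, sin t, -1]"

definition curve_gamma :: "real \<Rightarrow> real^3" where
  "curve_gamma t = vector [2 * cos (2*t) - 1, 2 * sin (2*t),
                           9/8 * cos t - 1/8 * cos (3*t)]"

definition setC :: "(real^3) set" where
  "setC = convex hull (curve_alpha ` {0..2*pi} \<union> curve_beta ` {0..2*pi} \<union> curve_gamma ` {0..pi})"

definition face_alpha :: "(real^3) set" where
  "face_alpha = convex hull (curve_alpha ` {0..2*pi})"

definition face_beta :: "(real^3) set" where
  "face_beta = convex hull (curve_beta ` {0..2*pi})"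

definition exposed_by_hyperplane :: "(real^3) set \<Rightarrow> (real^3) set \<Rightarrow> bool" where
  "exposed_by_hyperplane F S \<longleftrightarrow> F face_of S \<and>
     (\<exists>a b. a \<noteq> 0 \<and> S \<subseteq> {x. a \<bullet> x \<le> b} \<and> S \<inter> {x. a \<bullet> x = b} \<noteq> {} \<and>
            F = S \<inter> {x. a \<bullet> x = b})"

end

theory Submission
  imports Defs
begin

(* A proper face F of C lies in an exposed face C \<inter> H, and since the three curves form a compact
   set, C \<inter> H is the convex hull of their points on H.  If the normal (p, q, r) of H is not vertical,
   these contact points lie on a line:
   - for r > 0 the plane touches \<alpha> at most once and misses \<beta>.  Every contact of \<gamma> is a
     critical point of g(t) = b - (p, q, r) \<bullet> \<gamma>(t), and g'' + 4 g is strictly increasing, so a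
     Sturm comparison of g with sin (2 (t - t0)) puts any two contacts at distance \<ge> \<pi>/2: there are
     at most two.  If the plane also touches \<alpha>, a trigonometric argument leaves at most one contact
     of \<gamma> besides \<gamma>(0) = \<alpha>(0);
   - r < 0 reduces to r > 0 by the half-turn (x, y, z) \<mapsto> (x, -y, -z), a symmetry of the curves;
   - for r = 0 all contacts have the same x- and y-coordinates.
   Hence a two-dimensional face has a vertical normal, so H is z = 1 or z = -1 and the face is a disk. *)

section \<open>Sturm comparison\<close>

lemma sin_less_zero_if_neg: "- pi < x \<Longrightarrow> x < 0 \<Longrightarrow> sin x < 0"
  using sin_gt_zero[of "- x"] by simp

lemma strict_mono_on_sign_change:
  fixes K :: "real \<Rightarrow> real"
  assumes "a < c" "continuous_on {a..c} K" "strict_mono_on {a..c} K"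
  obtains c0 where "a \<le> c0" "c0 \<le> c"
    "\<And>t. a \<le> t \<Longrightarrow> t < c0 \<Longrightarrow> K t < 0" "\<And>t. c0 < t \<Longrightarrow> t \<le> c \<Longrightarrow> 0 < K t"
proof -
  have mono: "K s < K t" if "a \<le> s" "s < t" "t \<le> c" for s t
    using assms(3) that unfolding strict_mono_on_def by simp
  consider "0 \<le> K a" | "K c \<le> 0" | "K a < 0" "0 < K c" by linarith
  then show ?thesis
  proof cases
    case 1
    then show ?thesis using that[of a] mono \<open>a < c\<close> by fastforce
  next
    case 2
    then show ?thesis using that[of c] mono \<open>a < c\<close> by fastforce
  next
    case 3
    then obtain c0 where "a \<le> c0" "c0 \<le> c" "K c0 = 0"
      using IVT'[of K a 0 c] assms(1,2) by force
    then show ?thesis using that[of c0] mono by fastforce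
  qed
qed

lemma DERIV_pos_except_point_imp_less:
  fixes W W' :: "real \<Rightarrow> real"
  assumes "a < c" and W': "\<And>t. a \<le> t \<Longrightarrow> t \<le> c \<Longrightarrow> (W has_real_derivative W' t) (at t)"
    and pos: "\<And>t. a \<le> t \<Longrightarrow> t \<le> c \<Longrightarrow> t \<noteq> c0 \<Longrightarrow> 0 < W' t"
  shows "W a < W c"
proof -
  have cont: "continuous_on {a..c} W"
    using W' by (meson DERIV_continuous atLeastAtMost_iff continuous_at_imp_continuous_on)
  have incr: "W u < W v" if "a \<le> u" "u < v" "v \<le> c" "c0 \<notin> {u<..<v}" for u v
  proof (rule DERIV_pos_imp_increasing_open[OF \<open>u < v\<close>])
    fix t assume "u < t" "t < v"
    with that have "a \<le> t" "t \<le> c" "t \<noteq> c0" by auto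
    then show "\<exists>y. (W has_real_derivative y) (at t) \<and> 0 < y" using W' pos by blast
  next
    show "continuous_on {u..v} W" using that by (intro continuous_on_subset[OF cont]) auto
  qed
  show ?thesis
  proof (cases "a < c0 \<and> c0 < c")
    case True
    then have "W a < W c0" "W c0 < W c" using incr by auto
    then show ?thesis by simp
  next
    case False
    then show ?thesis using incr[of a c] \<open>a < c\<close> by auto
  qed
qed

lemma sturm_double_zeros_gap:
  fixes g g' g'' :: "real \<Rightarrow> real"
  assumes "0 < \<omega>" "a < c"
    and g': "\<And>t. a \<le> t \<Longrightarrow> t \<le> c \<Longrightarrow> (g has_real_derivative g' t) (at t)"
    and g'': "\<And>t. a \<le> t \<Longrightarrow> t \<le> c \<Longrightarrow> (g' has_real_derivative g'' t) (at t)"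
    and K_cont: "continuous_on {a..c} (\<lambda>t. g'' t + \<omega>\<^sup>2 * g t)"
    and K_mono: "strict_mono_on {a..c} (\<lambda>t. g'' t + \<omega>\<^sup>2 * g t)"
    and zeros: "g a = 0" "g' a = 0" "g c = 0" "g' c = 0"
  shows "pi \<le> \<omega> * (c - a)"
proof (rule ccontr)
  assume "\<not> pi \<le> \<omega> * (c - a)"
  then have short: "\<omega> * (c - a) < pi" by simp
  obtain c0 where c0: "a \<le> c0" "c0 \<le> c"
    and neg: "\<And>t. a \<le> t \<Longrightarrow> t < c0 \<Longrightarrow> g'' t + \<omega>\<^sup>2 * g t < 0"
    and pos: "\<And>t. c0 < t \<Longrightarrow> t \<le> c \<Longrightarrow> 0 < g'' t + \<omega>\<^sup>2 * g t"
    using strict_mono_on_sign_change[OF \<open>a < c\<close> K_cont K_mono] by blast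
  (* W is the Wronskian of g and sin (\<omega> (t - c0)), with c0 the sign change of g'' + \<omega>\<^sup>2 g: it
     increases strictly on [a, c], yet vanishes at both double zeros. *)
  define W where "W t = g' t * sin (\<omega> * (t - c0)) - \<omega> * g t * cos (\<omega> * (t - c0))" for t
  have W_deriv: "(W has_real_derivative (g'' t + \<omega>\<^sup>2 * g t) * sin (\<omega> * (t - c0))) (at t)"
    if "a \<le> t" "t \<le> c" for t
  proof -
    have "(W has_real_derivative g'' t * sin (\<omega> * (t - c0)) + g' t * (cos (\<omega> * (t - c0)) * \<omega>)
        - (\<omega> * g' t * cos (\<omega> * (t - c0)) + \<omega> * g t * (- sin (\<omega> * (t - c0)) * \<omega>))) (at t)"
      unfolding W_def[abs_def]
      by (rule derivative_eq_intros g'[OF that] g''[OF that] refl | simp)+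
    then show ?thesis by (simp add: power2_eq_square algebra_simps)
  qed
  have W_deriv_pos: "0 < (g'' t + \<omega>\<^sup>2 * g t) * sin (\<omega> * (t - c0))" if "a \<le> t" "t \<le> c" "t \<noteq> c0" for t
  proof -
    have "\<bar>t - c0\<bar> \<le> c - a" using that c0 by linarith
    then have "\<bar>\<omega> * (t - c0)\<bar> \<le> \<omega> * (c - a)" using \<open>0 < \<omega>\<close> by (simp add: abs_mult mult_left_mono)
    then have near: "\<bar>\<omega> * (t - c0)\<bar> < pi" using short by linarith
    show ?thesis
    proof (cases "t < c0")
      case True
      then have "sin (\<omega> * (t - c0)) < 0" using near \<open>0 < \<omega>\<close> by (intro sin_less_zero_if_neg) (auto simp: mult_pos_neg)
      then show ?thesis using neg[OF that(1) True] by (simp add: mult_neg_neg)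
    next
      case False
      then have "0 < sin (\<omega> * (t - c0))" using that near \<open>0 < \<omega>\<close> by (intro sin_gt_zero) auto
      then show ?thesis using pos[OF _ that(2)] False that(3) by simp
    qed
  qed
  have "W a < W c" by (rule DERIV_pos_except_point_imp_less[OF \<open>a < c\<close> W_deriv W_deriv_pos])
  moreover have "W a = 0" "W c = 0" using zeros by (simp_all add: W_def)
  ultimately show False by simp
qed

section \<open>Faces of convex hulls of compact sets\<close>

lemma convex_hull_Int_supporting_hyperplane:
  fixes S :: "'a::euclidean_space set"
  assumes "compact S" and supp: "S \<subseteq> {x. a \<bullet> x \<le> b}"
  shows "convex hull S \<inter> {x. a \<bullet> x = b} = convex hull (S \<inter> {x. a \<bullet> x = b})"
proof
  have "convex hull S \<subseteq> {x. a \<bullet> x \<le> b}"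
    using supp by (intro hull_minimal) (auto simp: convex_halfspace_le)
  then have "(convex hull S \<inter> {x. a \<bullet> x = b}) face_of convex hull S"
    by (intro face_of_Int_supporting_hyperplane_le) auto
  then obtain S' where "S' \<subseteq> S" and S': "convex hull S \<inter> {x. a \<bullet> x = b} = convex hull S'"
    using face_of_convex_hull_subset[OF \<open>compact S\<close>] by blast
  moreover have "S' \<subseteq> {x. a \<bullet> x = b}" using S' hull_subset[of S' convex] by blast
  ultimately show "convex hull S \<inter> {x. a \<bullet> x = b} \<subseteq> convex hull (S \<inter> {x. a \<bullet> x = b})"
    by (metis hull_mono le_inf_iff order_refl)
next
  show "convex hull (S \<inter> {x. a \<bullet> x = b}) \<subseteq> convex hull S \<inter> {x. a \<bullet> x = b}"
    by (simp add: convex_hyperplane hull_minimal hull_mono hull_subset le_infI2)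
qed

lemma face_of_subset_exposed_face:
  fixes S :: "'a::euclidean_space set"
  assumes "convex S" and F: "F face_of S" "F \<noteq> {}" "F \<noteq> S"
  obtains a b where "a \<noteq> 0" "S \<subseteq> {x. a \<bullet> x \<le> b}" "F \<subseteq> S \<inter> {x. a \<bullet> x = b}"
proof -
  obtain x where x: "x \<in> rel_interior F"
    using rel_interior_eq_empty face_of_imp_convex[OF F(1)] F(2) by blast
  then have "x \<in> S" using rel_interior_subset face_of_imp_subset[OF F(1)] by blast
  moreover have "x \<notin> rel_interior S"
    using face_of_disjoint_rel_interior[OF F(1,3)] x rel_interior_subset by blast
  ultimately obtain a where "a \<noteq> 0" and le: "\<And>y. y \<in> closure S \<Longrightarrow> a \<bullet> x \<le> a \<bullet> y"
    using supporting_hyperplane_relative_frontier[OF \<open>convex S\<close>] closure_subset by (metis subsetD)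
  have supp: "S \<subseteq> {y. (- a) \<bullet> y \<le> (- a) \<bullet> x}" using le closure_subset by force
  then have "S \<inter> {y. (- a) \<bullet> y = (- a) \<bullet> x} face_of S"
    using \<open>convex S\<close> by (intro face_of_Int_supporting_hyperplane_le) auto
  moreover have "F \<subseteq> S" using F(1) by (rule face_of_imp_subset)
  moreover have "(S \<inter> {y. (- a) \<bullet> y = (- a) \<bullet> x}) \<inter> rel_interior F \<noteq> {}"
    using x \<open>x \<in> S\<close> by blast
  ultimately have "F \<subseteq> S \<inter> {y. (- a) \<bullet> y = (- a) \<bullet> x}" by (rule subset_of_face_of)
  with \<open>a \<noteq> 0\<close> supp show thesis by (intro that[of "- a"]) auto
qed

lemma face_of_eq_if_aff_dim_eq:
  assumes "F face_of S" "F \<subseteq> T" "T \<subseteq> S" "convex T" "aff_dim F = aff_dim T"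
  shows "F = T"
proof (rule ccontr)
  assume "F \<noteq> T"
  moreover have "F face_of T" using assms(1-3) by (rule face_of_subset)
  ultimately have "aff_dim F < aff_dim T" using face_of_aff_dim_lt[OF assms(4)] by blast
  then show False using assms(5) by simp
qed

lemma aff_dim_le_1_if_subset_affine_hull_2:
  fixes S :: "'a::euclidean_space set"
  assumes "S \<subseteq> affine hull {X, Y}"
  shows "aff_dim S \<le> 1"
proof -
  have "aff_dim S \<le> aff_dim {X, Y}" using aff_dim_subset[OF assms] by simp
  also have "\<dots> \<le> of_nat (card {X, Y}) - 1" by (rule aff_dim_le_card) simp
  also have "\<dots> \<le> 1" by (simp add: card_insert_if)
  finally show ?thesis .
qed

lemma exposed_by_hyperplane_convex_hull_Int:
  fixes S :: "(real^3) set"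
  assumes "compact S" "a \<noteq> 0" "S \<subseteq> {x. a \<bullet> x \<le> b}" "S \<inter> {x. a \<bullet> x = b} \<noteq> {}"
  shows "exposed_by_hyperplane (convex hull (S \<inter> {x. a \<bullet> x = b})) (convex hull S)"
  unfolding exposed_by_hyperplane_def
proof (intro conjI exI)
  show hull_le: "convex hull S \<subseteq> {x. a \<bullet> x \<le> b}"
    using assms(3) by (intro hull_minimal) (auto simp: convex_halfspace_le)
  show eq: "convex hull (S \<inter> {x. a \<bullet> x = b}) = convex hull S \<inter> {x. a \<bullet> x = b}"
    using convex_hull_Int_supporting_hyperplane[OF assms(1,3)] ..
  show "convex hull (S \<inter> {x. a \<bullet> x = b}) face_of convex hull S"
    unfolding eq using hull_le by (intro face_of_Int_supporting_hyperplane_le) auto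
  show "convex hull S \<inter> {x. a \<bullet> x = b} \<noteq> {}" using assms(4) unfolding eq[symmetric] by simp
qed (fact assms(2))

section \<open>Heights along the curve \<gamma>\<close>

lemma inner_vector_3: "(a::real^3) \<bullet> vector [x, y, z] = a$1 * x + a$2 * y + a$3 * z"
  by (simp add: inner_vec_def sum_3)

definition gamma_z :: "real \<Rightarrow> real" where
  "gamma_z t = 9/8 * cos t - 1/8 * cos (3*t)"

lemma one_minus_gamma_z: "1 - gamma_z t = (1 - cos t)\<^sup>2 * (cos t + 2) / 2"
  unfolding gamma_z_def cos_treble_cos by (simp add: algebra_simps power2_eq_square power3_eq_cube)

lemma one_plus_gamma_z: "1 + gamma_z t = (1 + cos t)\<^sup>2 * (2 - cos t) / 2"
  unfolding gamma_z_def cos_treble_cos by (simp add: algebra_simps power2_eq_square power3_eq_cube)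

lemma gamma_z_le_one: "gamma_z t \<le> 1"
  using one_minus_gamma_z[of t] cos_ge_minus_one[of t]
  by (smt (verit) divide_nonneg_pos mult_nonneg_nonneg zero_le_power2)

lemma gamma_z_ge_minus_one: "-1 \<le> gamma_z t"
  using one_plus_gamma_z[of t] cos_le_one[of t]
  by (smt (verit) divide_nonneg_pos mult_nonneg_nonneg zero_le_power2)

lemma gamma_z_less_one:
  assumes "0 < t" "t \<le> pi"
  shows "gamma_z t < 1"
proof -
  have "cos t < 1" using cos_monotone_0_pi[of 0 t] assms by simp
  moreover have "0 < cos t + 2" using cos_ge_minus_one[of t] by linarith
  ultimately have "0 < (1 - cos t)\<^sup>2 * (cos t + 2) / 2" by simp
  then show ?thesis using one_minus_gamma_z[of t] by linarith
qed

lemma cos_eq_1_if_gamma_z_eq_1: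
  assumes "gamma_z t = 1"
  shows "cos t = 1"
  using assms one_minus_gamma_z[of t] cos_ge_minus_one[of t] by simp

lemma cos_eq_minus_1_if_gamma_z_eq_minus_1:
  assumes "gamma_z t = -1"
  shows "cos t = -1"
  using assms one_plus_gamma_z[of t] cos_le_one[of t] by (simp add: add_eq_0_iff)

definition gamma_inner :: "real \<Rightarrow> real \<Rightarrow> real \<Rightarrow> real \<Rightarrow> real" where
  "gamma_inner p q r t = p * (2 * cos (2*t) - 1) + q * (2 * sin (2*t)) + r * gamma_z t"

definition gamma_inner_deriv :: "real \<Rightarrow> real \<Rightarrow> real \<Rightarrow> real \<Rightarrow> real" where
  "gamma_inner_deriv p q r t = -4*p * sin (2*t) + 4*q * cos (2*t) + r * (-9/8 * sin t + 3/8 * sin (3*t))"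

definition gamma_inner_deriv2 :: "real \<Rightarrow> real \<Rightarrow> real \<Rightarrow> real \<Rightarrow> real" where
  "gamma_inner_deriv2 p q r t = -8*p * cos (2*t) - 8*q * sin (2*t) + r * (-9/8 * cos t + 9/8 * cos (3*t))"

lemma inner_curve_gamma: "a \<bullet> curve_gamma t = gamma_inner (a$1) (a$2) (a$3) t"
  unfolding curve_gamma_def inner_vector_3 gamma_inner_def gamma_z_def by (simp add: algebra_simps)

lemma gamma_inner_0: "gamma_inner p q r 0 = p + r"
  and gamma_inner_pi: "gamma_inner p q r pi = p - r"
  and gamma_inner_deriv_0: "gamma_inner_deriv p q r 0 = 4 * q"
  unfolding gamma_inner_def gamma_z_def gamma_inner_deriv_def cos_treble_cos by simp_all

lemma gamma_inner_has_derivative: "(gamma_inner p q r has_real_derivative gamma_inner_deriv p q r t) (at t)"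
  unfolding gamma_inner_def[abs_def] gamma_z_def gamma_inner_deriv_def
  by (rule derivative_eq_intros refl | simp add: algebra_simps)+

lemma gamma_inner_deriv_has_derivative:
  "(gamma_inner_deriv p q r has_real_derivative gamma_inner_deriv2 p q r t) (at t)"
  unfolding gamma_inner_deriv_def[abs_def] gamma_inner_deriv2_def
  by (rule derivative_eq_intros refl | simp add: algebra_simps)+

lemma gamma_inner_sturm_strict_mono:
  assumes "0 < r"
  shows "strict_mono_on {0..pi} (\<lambda>t. - gamma_inner_deriv2 p q r t + 2\<^sup>2 * (b - gamma_inner p q r t))"
proof (rule strict_mono_onI)
  have eq: "- gamma_inner_deriv2 p q r t + 2\<^sup>2 * (b - gamma_inner p q r t)
      = 4 * (b + p) - r * (3 * cos t + 5 * cos t ^ 3) / 2" for t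
    unfolding gamma_inner_deriv2_def gamma_inner_def gamma_z_def cos_treble_cos by (simp add: algebra_simps)
  fix s t assume "s \<in> {0..pi}" "t \<in> {0..pi}" "s < t"
  then have "cos t < cos s" by (intro cos_monotone_0_pi) auto
  moreover from this have "cos t ^ 3 \<le> cos s ^ 3" by (simp add: power_mono_odd)
  ultimately show "- gamma_inner_deriv2 p q r s + 2\<^sup>2 * (b - gamma_inner p q r s)
      < - gamma_inner_deriv2 p q r t + 2\<^sup>2 * (b - gamma_inner p q r t)"
    unfolding eq using \<open>0 < r\<close> by (simp add: divide_strict_right_mono)
qed

lemma gamma_inner_double_contacts_gap:
  assumes "0 < r" "0 \<le> s" "s < t" "t \<le> pi"
    and "gamma_inner p q r s = b" "gamma_inner p q r t = b"
    and "gamma_inner_deriv p q r s = 0" "gamma_inner_deriv p q r t = 0"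
  shows "pi / 2 \<le> t - s"
proof -
  have "pi \<le> 2 * (t - s)"
  proof (rule sturm_double_zeros_gap[where g = "\<lambda>t. b - gamma_inner p q r t"
        and g' = "\<lambda>t. - gamma_inner_deriv p q r t" and g'' = "\<lambda>t. - gamma_inner_deriv2 p q r t"])
    show "continuous_on {s..t} (\<lambda>t. - gamma_inner_deriv2 p q r t + 2\<^sup>2 * (b - gamma_inner p q r t))"
      unfolding gamma_inner_def gamma_z_def gamma_inner_deriv2_def by (intro continuous_intros)
    show "strict_mono_on {s..t} (\<lambda>t. - gamma_inner_deriv2 p q r t + 2\<^sup>2 * (b - gamma_inner p q r t))"
      by (rule monotone_on_subset[OF gamma_inner_sturm_strict_mono[OF \<open>0 < r\<close>]]) (use assms in auto)
    show "((\<lambda>t. b - gamma_inner p q r t) has_real_derivative - gamma_inner_deriv p q r x) (at x)" for x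
      using DERIV_diff[OF DERIV_const gamma_inner_has_derivative] by simp
    show "((\<lambda>t. - gamma_inner_deriv p q r t) has_real_derivative - gamma_inner_deriv2 p q r x) (at x)" for x
      using DERIV_minus[OF gamma_inner_deriv_has_derivative] .
  qed (use assms in auto)
  then show ?thesis by simp
qed

lemma gamma_inner_contacts_separated:
  assumes "0 < r" and below: "\<And>t. 0 \<le> t \<Longrightarrow> t \<le> pi \<Longrightarrow> gamma_inner p q r t \<le> b"
    and disk: "sqrt (p\<^sup>2 + q\<^sup>2) + r \<le> b"
    and "0 \<le> s" "s < t" "t < pi" "gamma_inner p q r s = b" "gamma_inner p q r t = b"
  shows "pi / 2 \<le> t - s"
proof -
  have critical: "gamma_inner_deriv p q r u = 0" if "0 \<le> u" "u < pi" "gamma_inner p q r u = b" for u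
  proof (cases "u = 0")
    case True
    (* the endpoint contact is critical because the bound from \<alpha> forces q = 0 *)
    then have "sqrt (p\<^sup>2 + q\<^sup>2) \<le> sqrt (p\<^sup>2)" using that disk by (simp add: gamma_inner_0)
    then have "q = 0" unfolding real_sqrt_le_iff by simp
    then show ?thesis using True by (simp add: gamma_inner_deriv_0)
  next
    case False
    show ?thesis
    proof (rule DERIV_local_max[OF gamma_inner_has_derivative])
      show "0 < min u (pi - u)" using False that by simp
      show "\<forall>y. \<bar>u - y\<bar> < min u (pi - u) \<longrightarrow> gamma_inner p q r y \<le> gamma_inner p q r u"
        using below that(3) by (auto simp: abs_less_iff)
    qed
  qed
  show ?thesis
    using gamma_inner_double_contacts_gap[OF \<open>0 < r\<close>] critical assms(4-) by simp
qed

lemma gamma_inner_level_pairs_close: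
  assumes "0 < r" "0 < s" "s < t" "t < pi"
    and "gamma_inner p q r s = sqrt (p\<^sup>2 + q\<^sup>2) + r" "gamma_inner p q r t = sqrt (p\<^sup>2 + q\<^sup>2) + r"
  shows "t - s < pi / 2"
proof (rule ccontr)
  assume "\<not> t - s < pi / 2"
  then have wide: "pi \<le> 2 * t - 2 * s" by simp
  define h where "h = sqrt (p\<^sup>2 + q\<^sup>2)"
  define k where "k = (h + p) / 2"
  define F where "F u = p * cos (2*u) + q * sin (2*u)" for u
  have F_gt: "k < F u" if "0 < u" "u < pi" "gamma_inner p q r u = h + r" for u
  proof -
    have "2 * F u = h + p + r * (1 - gamma_z u)"
      using that(3) unfolding F_def gamma_inner_def by (simp add: algebra_simps)
    moreover have "0 < r * (1 - gamma_z u)"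
      using gamma_z_less_one[of u] that \<open>0 < r\<close> by simp
    ultimately show ?thesis unfolding k_def by simp
  qed
  have Fs: "k < F s" and Ft: "k < F t" using F_gt assms unfolding h_def by auto
  have "\<bar>p\<bar> \<le> h" unfolding h_def by (metis real_sqrt_abs real_sqrt_le_mono le_add_same_cancel1 zero_le_power2)
  then have pk: "p \<le> k" and k0: "0 \<le> k" unfolding k_def by auto
  (* The unit vectors e(0), e(2s), e(2t) satisfy a linear relation whose coefficients have signs
     \<le> 0, > 0, > 0 and a nonnegative sum; pairing it with (p, q) contradicts p \<le> k < F s, F t. *)
  have dep: "sin (2 * t - 2 * s) * p - sin (2 * t) * F s + sin (2 * s) * F t = 0"
    unfolding F_def sin_diff by (simp add: algebra_simps)
  have s2: "0 < sin (2 * s)" using assms wide by (intro sin_gt_zero) auto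
  have t2: "sin (2 * t) < 0" using assms wide by (intro sin_lt_zero) auto
  have st2: "sin (2 * t - 2 * s) \<le> 0" using assms wide by (intro sin_le_zero) auto
  have "sin (2 * t - 2 * s) - sin (2 * t) + sin (2 * s)
        = (- sin (2 * t)) * (1 - cos (2 * s)) + sin (2 * s) * (1 - cos (2 * t))"
    unfolding sin_diff by (simp add: algebra_simps)
  also have "\<dots> \<ge> 0" using s2 t2 by (intro add_nonneg_nonneg mult_nonneg_nonneg) auto
  finally have "0 \<le> k * (sin (2 * t - 2 * s) - sin (2 * t) + sin (2 * s))" using k0 by simp
  moreover have "sin (2 * t - 2 * s) * k \<le> sin (2 * t - 2 * s) * p" by (rule mult_left_mono_neg[OF pk st2])
  moreover have "- sin (2 * t) * k \<le> - sin (2 * t) * F s" using t2 Fs by (intro mult_left_mono) auto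
  moreover have "sin (2 * s) * k < sin (2 * s) * F t" using s2 Ft by simp
  ultimately show False using dep by (simp add: algebra_simps)
qed

section \<open>Supporting planes with non-vertical normal\<close>

lemma polar_angle_exists:
  fixes p q :: real
  assumes "p \<noteq> 0 \<or> q \<noteq> 0"
  obtains s0 where "0 \<le> s0" "s0 \<le> 2*pi" "\<And>s. p * cos s + q * sin s = sqrt (p\<^sup>2 + q\<^sup>2) * cos (s - s0)"
proof -
  define h where "h = sqrt (p\<^sup>2 + q\<^sup>2)"
  have "0 < h" using assms unfolding h_def by (simp add: sum_power2_gt_zero_iff)
  have "(p/h)\<^sup>2 + (q/h)\<^sup>2 = (p\<^sup>2 + q\<^sup>2) / h\<^sup>2" by (metis add_divide_distrib power_divide)
  also have "\<dots> = 1" using assms unfolding h_def by simp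
  finally obtain s0 where s0: "0 \<le> s0" "s0 < 2*pi" "p/h = cos s0" "q/h = sin s0"
    by (rule sincos_total_2pi)
  then have "p = h * cos s0" "q = h * sin s0" using \<open>0 < h\<close> by (simp_all add: field_simps)
  then have "p * cos s + q * sin s = h * cos (s - s0)" for s
    by (simp add: cos_diff algebra_simps)
  then show ?thesis using that s0(1,2) unfolding h_def by simp
qed

lemma subset_doubleton_if_separated:
  fixes T :: "real set"
  assumes "T \<subseteq> {a..<a + 2*d}" and sep: "\<And>x y. x \<in> T \<Longrightarrow> y \<in> T \<Longrightarrow> x < y \<Longrightarrow> d \<le> y - x"
  obtains u w where "T \<subseteq> {u, w}"
proof -
  have "\<not> (x < y \<and> y < z)" if "x \<in> T" "y \<in> T" "z \<in> T" for x y z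
  proof
    assume "x < y \<and> y < z"
    moreover have "a \<le> x" "z < a + 2*d" using that assms(1) by auto
    ultimately show False using sep[OF that(1,2)] sep[OF that(2,3)] by linarith
  qed
  then have "x = y \<or> x = z \<or> y = z" if "x \<in> T" "y \<in> T" "z \<in> T" for x y z
    using that by (metis linorder_neqE_linordered_idom)
  then show ?thesis using that by (metis insertCI subsetI)
qed

lemma vec3_eqI: "(x::real^3)$1 = y$1 \<Longrightarrow> x$2 = y$2 \<Longrightarrow> x$3 = y$3 \<Longrightarrow> x = y"
  by (simp add: vec_eq_iff forall_3)

definition curves :: "(real^3) set" where
  "curves = curve_alpha ` {0..2*pi} \<union> curve_beta ` {0..2*pi} \<union> curve_gamma ` {0..pi}"

lemma setC_eq_convex_hull_curves: "setC = convex hull curves"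
  unfolding setC_def curves_def ..

lemma curvesE:
  assumes "v \<in> curves"
  obtains (alpha) s where "0 \<le> s" "s \<le> 2*pi" "v = curve_alpha s"
        | (beta) s where "0 \<le> s" "s \<le> 2*pi" "v = curve_beta s"
        | (gamma) t where "0 \<le> t" "t \<le> pi" "v = curve_gamma t"
  using assms unfolding curves_def by auto

lemma curve_alpha_in_curves: "0 \<le> s \<Longrightarrow> s \<le> 2*pi \<Longrightarrow> curve_alpha s \<in> curves"
  and curve_beta_in_curves: "0 \<le> s \<Longrightarrow> s \<le> 2*pi \<Longrightarrow> curve_beta s \<in> curves"
  and curve_gamma_in_curves: "0 \<le> t \<Longrightarrow> t \<le> pi \<Longrightarrow> curve_gamma t \<in> curves"
  unfolding curves_def by auto

lemma inner_curve_alpha: "a \<bullet> curve_alpha s = a$1 * cos s + a$2 * sin s + a$3"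
  and inner_curve_beta: "a \<bullet> curve_beta s = a$1 * cos s + a$2 * sin s - a$3"
  unfolding curve_alpha_def curve_beta_def inner_vector_3 by simp_all

lemma curve_gamma_0: "curve_gamma 0 = curve_alpha 0"
  unfolding curve_gamma_def curve_alpha_def by simp

lemma curve_gamma_xy: "curve_gamma t $ 1 = 2 * curve_alpha (2 * t) $ 1 - 1"
  "curve_gamma t $ 2 = 2 * curve_alpha (2 * t) $ 2"
  unfolding curve_gamma_def curve_alpha_def by simp_all

lemma curve_beta_xy: "curve_beta s $ 1 = curve_alpha s $ 1" "curve_beta s $ 2 = curve_alpha s $ 2"
  unfolding curve_alpha_def curve_beta_def by simp_all

lemma curve_alpha_argmax:
  fixes a :: "real^3"
  assumes "a$1 \<noteq> 0 \<or> a$2 \<noteq> 0"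
  obtains s0 where "0 \<le> s0" "s0 \<le> 2*pi" "a \<bullet> curve_alpha s0 = sqrt ((a$1)\<^sup>2 + (a$2)\<^sup>2) + a$3"
    "\<And>s. a \<bullet> curve_alpha s \<le> a \<bullet> curve_alpha s0"
    "\<And>s. a \<bullet> curve_alpha s = a \<bullet> curve_alpha s0 \<Longrightarrow> curve_alpha s = curve_alpha s0"
proof -
  define h where "h = sqrt ((a$1)\<^sup>2 + (a$2)\<^sup>2)"
  obtain s0 where s0: "0 \<le> s0" "s0 \<le> 2*pi" and rot: "\<And>s. a$1 * cos s + a$2 * sin s = h * cos (s - s0)"
    using polar_angle_exists[OF assms] unfolding h_def by blast
  have "0 < h" using assms unfolding h_def by (simp add: sum_power2_gt_zero_iff)
  have inner: "a \<bullet> curve_alpha s = h * cos (s - s0) + a$3" for s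
    unfolding inner_curve_alpha rot ..
  show thesis
  proof (rule that[OF s0])
    show "a \<bullet> curve_alpha s0 = sqrt ((a$1)\<^sup>2 + (a$2)\<^sup>2) + a$3" by (simp add: inner h_def)
    show "a \<bullet> curve_alpha s \<le> a \<bullet> curve_alpha s0" for s using \<open>0 < h\<close> by (simp add: inner)
    show "curve_alpha s = curve_alpha s0" if "a \<bullet> curve_alpha s = a \<bullet> curve_alpha s0" for s
    proof -
      from that have "cos (s - s0) = 1" using \<open>0 < h\<close> by (simp add: inner)
      moreover from this have "sin (s - s0) = 0" using sin_cos_squared_add[of "s - s0"] by simp
      ultimately have "cos s = cos s0" "sin s = sin s0"
        using cos_add[of "s - s0" s0] sin_add[of "s - s0" s0] by simp_all
      then show ?thesis by (simp add: curve_alpha_def)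
    qed
  qed
qed

lemma curves_contacts_upward:
  fixes a :: "real^3"
  assumes up: "0 < a$3" and tilted: "a$1 \<noteq> 0 \<or> a$2 \<noteq> 0"
    and supp: "\<And>v. v \<in> curves \<Longrightarrow> a \<bullet> v \<le> b"
  obtains X Y where "curves \<inter> {v. a \<bullet> v = b} \<subseteq> {X, Y}"
proof -
  obtain s0 where s0: "0 \<le> s0" "s0 \<le> 2*pi"
    and top: "a \<bullet> curve_alpha s0 = sqrt ((a$1)\<^sup>2 + (a$2)\<^sup>2) + a$3"
    and max: "\<And>s. a \<bullet> curve_alpha s \<le> a \<bullet> curve_alpha s0"
    and uniq: "\<And>s. a \<bullet> curve_alpha s = a \<bullet> curve_alpha s0 \<Longrightarrow> curve_alpha s = curve_alpha s0"
    using curve_alpha_argmax[OF tilted] by blast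
  have top_le: "a \<bullet> curve_alpha s0 \<le> b" using supp curve_alpha_in_curves s0 by blast
  have alpha_contact: "curve_alpha s = curve_alpha s0 \<and> b = a \<bullet> curve_alpha s0"
    if "a \<bullet> curve_alpha s = b" for s
    using max[of s] top_le that uniq by force
  have beta_no_contact: "a \<bullet> curve_beta s < b" for s
    using max[of s] top_le up by (simp add: inner_curve_alpha inner_curve_beta)
  define T where "T = {t. 0 \<le> t \<and> t < pi \<and> a \<bullet> curve_gamma t = b}"
  have gamma_contact: "t \<in> T" if "0 \<le> t" "t \<le> pi" "a \<bullet> curve_gamma t = b" for t
  proof -
    have "a \<bullet> curve_gamma 0 \<le> b" using supp curve_gamma_in_curves[of 0] by simp
    then have "t \<noteq> pi" using that up by (auto simp: inner_curve_gamma gamma_inner_0 gamma_inner_pi)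
    then show ?thesis using that unfolding T_def by simp
  qed
  have separated: "pi / 2 \<le> y - x" if "x \<in> T" "y \<in> T" "x < y" for x y
    using gamma_inner_contacts_separated[OF up, of "a$1" "a$2" b x y] supp[OF curve_gamma_in_curves]
      top top_le that
    unfolding T_def inner_curve_gamma by auto
  have contacts: "(v = curve_alpha s0 \<and> b = a \<bullet> curve_alpha s0) \<or> (\<exists>t\<in>T. v = curve_gamma t)"
    if "v \<in> curves" "a \<bullet> v = b" for v
    using that(1) by (cases rule: curvesE) (use that alpha_contact beta_no_contact gamma_contact in auto)
  show thesis
  proof (cases "b = a \<bullet> curve_alpha s0")
    case True
    have "\<not> x < y" if "x \<in> T - {0}" "y \<in> T - {0}" for x y
      using separated[of x y] gamma_inner_level_pairs_close[OF up, of x y "a$1" "a$2"] that True top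
      unfolding T_def inner_curve_gamma by force
    then obtain ts where ts: "T - {0} \<subseteq> {ts}" by (metis insertI1 linorder_neqE subsetI singletonD)
    have "curve_gamma 0 = curve_alpha s0" if "0 \<in> T"
      using that True uniq[of 0] max[of 0] curve_gamma_0 unfolding T_def by simp
    then have "curves \<inter> {v. a \<bullet> v = b} \<subseteq> {curve_alpha s0, curve_gamma ts}"
      using contacts ts by blast
    then show thesis by (rule that)
  next
    case False
    obtain u w where "T \<subseteq> {u, w}"
      by (rule subset_doubleton_if_separated[of T 0 "pi/2"]) (use separated in \<open>auto simp: T_def\<close>)
    then have "curves \<inter> {v. a \<bullet> v = b} \<subseteq> {curve_gamma u, curve_gamma w}"
      using contacts False by blast
    then show thesis by (rule that)
  qed
qed

lemma curves_contacts_horizontal_normal: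
  fixes a :: "real^3"
  assumes horizontal: "a$3 = 0" and tilted: "a$1 \<noteq> 0 \<or> a$2 \<noteq> 0"
    and supp: "\<And>v. v \<in> curves \<Longrightarrow> a \<bullet> v \<le> b"
  obtains x0 y0 where "\<And>v. v \<in> curves \<Longrightarrow> a \<bullet> v = b \<Longrightarrow> v$1 = x0 \<and> v$2 = y0"
proof -
  obtain s0 where s0: "0 \<le> s0" "s0 \<le> 2*pi"
    and "a \<bullet> curve_alpha s0 = sqrt ((a$1)\<^sup>2 + (a$2)\<^sup>2) + a$3"
    and max: "\<And>s. a \<bullet> curve_alpha s \<le> a \<bullet> curve_alpha s0"
    and uniq: "\<And>s. a \<bullet> curve_alpha s = a \<bullet> curve_alpha s0 \<Longrightarrow> curve_alpha s = curve_alpha s0"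
    using curve_alpha_argmax[OF tilted] by blast
  have on_beta: "a \<bullet> curve_beta s = a \<bullet> curve_alpha s" for s
    by (simp add: inner_curve_alpha inner_curve_beta horizontal)
  have on_gamma: "a \<bullet> curve_gamma t = 2 * (a \<bullet> curve_alpha (2 * t)) - a$1" for t
    by (simp add: inner_curve_gamma gamma_inner_def inner_curve_alpha horizontal algebra_simps)
  have alpha_0: "a \<bullet> curve_alpha 0 = a$1" by (simp add: inner_curve_alpha horizontal)
  have gamma_le: "2 * (a \<bullet> curve_alpha s0) - a$1 \<le> b"
    using supp[OF curve_gamma_in_curves, of "s0/2"] s0 by (simp add: on_gamma)
  have gamma_contact: "curve_alpha (2 * t) = curve_alpha s0" if "a \<bullet> curve_gamma t = b" for t
  proof (rule uniq)
    show "a \<bullet> curve_alpha (2 * t) = a \<bullet> curve_alpha s0"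
      using that gamma_le max[of "2 * t"] by (simp add: on_gamma)
  qed
  have circle_contact: "curve_alpha s = curve_alpha s0 \<and> curve_alpha s0 = vector [1, 0, 1]"
    if "a \<bullet> curve_alpha s = b" for s
  proof -
    have "a \<bullet> curve_alpha s = a \<bullet> curve_alpha s0" "a \<bullet> curve_alpha 0 = a \<bullet> curve_alpha s0"
      using that gamma_le max[of s] max[of 0] alpha_0 by linarith+
    then show ?thesis using uniq by (metis curve_alpha_def cos_zero sin_zero)
  qed
  show thesis
  proof (rule that[of "2 * curve_alpha s0 $ 1 - 1" "2 * curve_alpha s0 $ 2"])
    fix v assume "v \<in> curves" "a \<bullet> v = b"
    from \<open>v \<in> curves\<close> show "v$1 = 2 * curve_alpha s0 $ 1 - 1 \<and> v$2 = 2 * curve_alpha s0 $ 2"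
    proof (cases rule: curvesE)
      case (alpha s)
      then have "a \<bullet> curve_alpha s = b" using \<open>a \<bullet> v = b\<close> by simp
      from circle_contact[OF this] show ?thesis unfolding alpha(3) by simp
    next
      case (beta s)
      then have "a \<bullet> curve_alpha s = b" using \<open>a \<bullet> v = b\<close> by (simp add: on_beta)
      from circle_contact[OF this] show ?thesis unfolding beta(3) by (simp add: curve_beta_xy)
    next
      case (gamma t)
      then show ?thesis using gamma_contact[of t] \<open>a \<bullet> v = b\<close> by (simp add: curve_gamma_xy)
    qed
  qed
qed

definition half_turn :: "real^3 \<Rightarrow> real^3" where
  "half_turn v = vector [v$1, - v$2, - v$3]"

lemma half_turn_nth [simp]: "half_turn v $ 1 = v$1" "half_turn v $ 2 = - v$2" "half_turn v $ 3 = - v$3"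
  unfolding half_turn_def by simp_all

lemma half_turn_half_turn [simp]: "half_turn (half_turn v) = v"
  by (rule vec3_eqI) simp_all

lemma inner_half_turn: "half_turn a \<bullet> half_turn v = a \<bullet> v"
  by (simp add: inner_vec_def sum_3)

lemma half_turn_curve_alpha: "half_turn (curve_alpha s) = curve_beta (2*pi - s)"
  and half_turn_curve_beta: "half_turn (curve_beta s) = curve_alpha (2*pi - s)"
  by (rule vec3_eqI; simp add: curve_alpha_def curve_beta_def)+

lemma half_turn_curve_gamma: "half_turn (curve_gamma t) = curve_gamma (pi - t)"
proof -
  have "cos (2 * (pi - t)) = cos (2 * t)" "sin (2 * (pi - t)) = - sin (2 * t)"
    by (simp_all add: right_diff_distrib)
  moreover have "cos (3 * (pi - t)) = - cos (3 * t)"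
    unfolding cos_treble_cos by (simp add: power3_eq_cube)
  ultimately show ?thesis by (intro vec3_eqI) (simp_all add: curve_gamma_def)
qed

lemma half_turn_in_curves: "v \<in> curves \<Longrightarrow> half_turn v \<in> curves"
  by (erule curvesE)
    (auto simp: half_turn_curve_alpha half_turn_curve_beta half_turn_curve_gamma
      intro!: curve_alpha_in_curves curve_beta_in_curves curve_gamma_in_curves)

lemma curves_contacts_downward:
  fixes a :: "real^3"
  assumes down: "a$3 < 0" and tilted: "a$1 \<noteq> 0 \<or> a$2 \<noteq> 0"
    and supp: "\<And>v. v \<in> curves \<Longrightarrow> a \<bullet> v \<le> b"
  obtains X Y where "curves \<inter> {v. a \<bullet> v = b} \<subseteq> {X, Y}"
proof -
  have supp': "half_turn a \<bullet> v \<le> b" if "v \<in> curves" for v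
    using supp[OF half_turn_in_curves[OF that]] inner_half_turn[of a "half_turn v"] by simp
  have up': "0 < half_turn a $ 3" and tilted': "half_turn a $ 1 \<noteq> 0 \<or> half_turn a $ 2 \<noteq> 0"
    using down tilted by simp_all
  obtain X Y where XY: "curves \<inter> {v. half_turn a \<bullet> v = b} \<subseteq> {X, Y}"
    by (rule curves_contacts_upward[OF up' tilted' supp'])
  have "curves \<inter> {v. a \<bullet> v = b} \<subseteq> {half_turn X, half_turn Y}"
  proof
    fix v assume "v \<in> curves \<inter> {v. a \<bullet> v = b}"
    then have "half_turn v \<in> {X, Y}" using XY half_turn_in_curves inner_half_turn by blast
    then have "half_turn (half_turn v) \<in> half_turn ` {X, Y}" by (rule imageI)
    then show "v \<in> {half_turn X, half_turn Y}" by simp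
  qed
  then show thesis by (rule that)
qed

lemma aff_dim_curves_contacts_le_1:
  fixes a :: "real^3"
  assumes tilted: "a$1 \<noteq> 0 \<or> a$2 \<noteq> 0" and supp: "\<And>v. v \<in> curves \<Longrightarrow> a \<bullet> v \<le> b"
  shows "aff_dim (curves \<inter> {v. a \<bullet> v = b}) \<le> 1"
proof -
  have pair: "aff_dim (curves \<inter> {v. a \<bullet> v = b}) \<le> 1" if "curves \<inter> {v. a \<bullet> v = b} \<subseteq> {X, Y}" for X Y
    using that hull_subset[of "{X, Y}" affine] aff_dim_le_1_if_subset_affine_hull_2 by blast
  consider "0 < a$3" | "a$3 = 0" | "a$3 < 0" by linarith
  then show ?thesis
  proof cases
    case 1
    then show ?thesis using curves_contacts_upward[OF 1 tilted supp] pair by blast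
  next
    case 2
    then obtain x0 y0 where line: "\<And>v. v \<in> curves \<Longrightarrow> a \<bullet> v = b \<Longrightarrow> v$1 = x0 \<and> v$2 = y0"
      using curves_contacts_horizontal_normal tilted supp by blast
    have "v \<in> affine hull {vector [x0, y0, 0], vector [x0, y0, 1]}"
      if "v \<in> curves" "a \<bullet> v = b" for v
    proof -
      have "v = (1 - v$3) *\<^sub>R vector [x0, y0, 0] + v$3 *\<^sub>R vector [x0, y0, 1]"
        using line[OF that] by (intro vec3_eqI) (auto simp: algebra_simps)
      then show ?thesis unfolding affine_hull_2 by force
    qed
    then show ?thesis by (blast intro: aff_dim_le_1_if_subset_affine_hull_2)
  next
    case 3
    then show ?thesis using curves_contacts_downward[OF 3 tilted supp] pair by blast
  qed
qed

section \<open>The two disks\<close>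

lemma curve_alpha_nth_3 [simp]: "curve_alpha s $ 3 = 1"
  and curve_beta_nth_3 [simp]: "curve_beta s $ 3 = -1"
  and curve_gamma_nth_3 [simp]: "curve_gamma t $ 3 = gamma_z t"
  unfolding curve_alpha_def curve_beta_def curve_gamma_def gamma_z_def by simp_all

lemma curves_z_bounds: "v \<in> curves \<Longrightarrow> -1 \<le> v$3 \<and> v$3 \<le> 1"
  by (erule curvesE) (simp_all add: gamma_z_le_one gamma_z_ge_minus_one)

lemma curves_Int_top: "curves \<inter> {v. v$3 = 1} = curve_alpha ` {0..2*pi}"
proof (intro equalityI subsetI)
  fix v assume "v \<in> curves \<inter> {v. v$3 = 1}"
  then have "v \<in> curves" "v$3 = 1" by auto
  from this(1) show "v \<in> curve_alpha ` {0..2*pi}"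
  proof (cases rule: curvesE)
    case (gamma t)
    then have "cos t = 1" using \<open>v$3 = 1\<close> cos_eq_1_if_gamma_z_eq_1 by simp
    then have "v = curve_alpha 0"
      using gamma(3) sin_cos_squared_add[of t]
      by (intro vec3_eqI) (simp_all add: curve_gamma_def curve_alpha_def cos_double sin_double cos_treble_cos)
    then show ?thesis by force
  qed (use \<open>v$3 = 1\<close> in auto)
qed (auto intro: curve_alpha_in_curves)

lemma curves_Int_bottom: "curves \<inter> {v. v$3 = -1} = curve_beta ` {0..2*pi}"
proof (intro equalityI subsetI)
  fix v assume "v \<in> curves \<inter> {v. v$3 = -1}"
  then have "v \<in> curves" "v$3 = -1" by auto
  from this(1) show "v \<in> curve_beta ` {0..2*pi}"
  proof (cases rule: curvesE)
    case (gamma t)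
    then have "cos t = -1" using \<open>v$3 = -1\<close> cos_eq_minus_1_if_gamma_z_eq_minus_1 by simp
    then have "v = curve_beta 0"
      using gamma(3) sin_cos_squared_add[of t]
      by (intro vec3_eqI) (simp_all add: curve_gamma_def curve_beta_def cos_double sin_double cos_treble_cos)
    then show ?thesis by force
  qed (use \<open>v$3 = -1\<close> in auto)
qed (auto intro: curve_beta_in_curves)

lemma continuous_on_vector_3:
  assumes "continuous_on A f" "continuous_on A g" "continuous_on A h"
  shows "continuous_on A (\<lambda>t. vector [f t, g t, h t] :: real^3)"
proof -
  have "continuous_on A (\<lambda>t. vector [f t, g t, h t] $ i)" for i :: 3
    using exhaust_3[of i] assms by auto
  then show ?thesis by (rule continuous_on_vec_lambda[where f = "\<lambda>i t. vector [f t, g t, h t] $ i", simplified])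
qed

lemma compact_curves: "compact curves"
proof -
  have "continuous_on A curve_alpha" "continuous_on A curve_beta" "continuous_on A curve_gamma" for A
    unfolding curve_alpha_def[abs_def] curve_beta_def[abs_def] curve_gamma_def[abs_def]
    by (intro continuous_on_vector_3 continuous_intros)+
  then show ?thesis unfolding curves_def by (intro compact_Un compact_continuous_image compact_Icc)
qed

lemma convex_setC: "convex setC" and compact_setC: "compact setC"
  unfolding setC_eq_convex_hull_curves by (simp_all add: compact_convex_hull compact_curves)

lemma aff_dim_horizontal_circle: "aff_dim ((\<lambda>t. vector [cos t, sin t, z] :: real^3) ` {0..2*pi}) = 2"
proof (rule antisym)
  let ?C = "(\<lambda>t. vector [cos t, sin t, z] :: real^3) ` {0..2*pi}"
  have "?C \<subseteq> {x. axis 3 1 \<bullet> x = z}" by (auto simp: inner_axis')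
  then have "aff_dim ?C \<le> aff_dim {x :: real^3. axis 3 1 \<bullet> x = z}" by (rule aff_dim_subset)
  then show "aff_dim ?C \<le> 2" by (simp add: axis_eq_0_iff)
  let ?P = "vector [1, 0, z] :: real^3" and ?Q = "vector [0, 1, z] :: real^3"
    and ?R = "vector [-1, 0, z] :: real^3"
  have "?Q \<notin> affine hull {?R}" by (auto simp: vec_eq_iff forall_3)
  moreover have "?P \<notin> affine hull {?Q, ?R}"
  proof
    assume "?P \<in> affine hull {?Q, ?R}"
    then obtain u v where "u + v = 1" "?P = u *\<^sub>R ?Q + v *\<^sub>R ?R" unfolding affine_hull_2 by blast
    then have "1 = - v" "0 = u" by (simp_all add: vec_eq_iff forall_3)
    then show False using \<open>u + v = 1\<close> by simp
  qed
  ultimately have "aff_dim {?P, ?Q, ?R} = 2" by (simp add: aff_dim_insert)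
  have "?P \<in> ?C" by (rule image_eqI[where x = 0]) simp_all
  moreover have "?Q \<in> ?C" by (rule image_eqI[where x = "pi/2"]) simp_all
  moreover have "?R \<in> ?C" by (rule image_eqI[where x = pi]) simp_all
  ultimately have "aff_dim {?P, ?Q, ?R} \<le> aff_dim ?C" by (intro aff_dim_subset) simp
  then show "2 \<le> aff_dim ?C" using \<open>aff_dim {?P, ?Q, ?R} = 2\<close> by simp
qed

lemma aff_dim_face_alpha: "aff_dim face_alpha = 2"
  and aff_dim_face_beta: "aff_dim face_beta = 2"
  unfolding face_alpha_def face_beta_def curve_alpha_def[abs_def] curve_beta_def[abs_def]
  by (simp_all only: aff_dim_convex_hull aff_dim_horizontal_circle)

lemma face_alpha_subset_setC: "face_alpha \<subseteq> setC"
  and face_beta_subset_setC: "face_beta \<subseteq> setC"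
  unfolding face_alpha_def face_beta_def setC_def by (rule hull_mono; auto)+

lemma aff_dim_setC: "aff_dim setC = 3"
proof (rule antisym)
  show "aff_dim setC \<le> 3" using aff_dim_le_DIM[of setC] by simp
  have "face_alpha \<subseteq> {x. axis 3 1 \<bullet> x = 1}"
    unfolding face_alpha_def by (intro hull_minimal convex_hyperplane) (auto simp: inner_axis')
  then have "affine hull face_alpha \<subseteq> {x. axis 3 1 \<bullet> x = 1}"
    by (intro hull_minimal) (auto simp: affine_hyperplane)
  then have "curve_beta 0 \<notin> affine hull face_alpha" by (auto simp: inner_axis')
  then have "aff_dim (insert (curve_beta 0) face_alpha) = 3"
    by (simp add: aff_dim_insert aff_dim_face_alpha)
  moreover have "insert (curve_beta 0) face_alpha \<subseteq> setC"
    using face_alpha_subset_setC curve_beta_in_curves[of 0]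
    unfolding setC_eq_convex_hull_curves by (auto intro: hull_inc)
  ultimately show "3 \<le> aff_dim setC" by (metis aff_dim_subset)
qed

lemma curves_Int_horizontal_hyperplane:
  fixes a :: "real^3"
  assumes "a$1 = 0" "a$2 = 0" "a \<noteq> 0"
    and supp: "curves \<subseteq> {x. a \<bullet> x \<le> b}" and touch: "curves \<inter> {x. a \<bullet> x = b} \<noteq> {}"
  shows "curves \<inter> {x. a \<bullet> x = b} = curve_alpha ` {0..2*pi}
    \<or> curves \<inter> {x. a \<bullet> x = b} = curve_beta ` {0..2*pi}"
proof -
  have inner: "a \<bullet> x = a$3 * x$3" for x using assms(1,2) by (simp add: inner_vec_def sum_3)
  have "a$3 \<noteq> 0" using assms(1-3) vec3_eqI[of a 0] by auto
  obtain v where v: "v \<in> curves" "a$3 * v$3 = b" using touch inner by auto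
  have top: "a$3 \<le> b" and bottom: "- a$3 \<le> b"
    using supp curve_alpha_in_curves[of 0] curve_beta_in_curves[of 0] by (auto simp: inner)
  consider "0 < a$3" | "a$3 < 0" using \<open>a$3 \<noteq> 0\<close> by linarith
  then show ?thesis
  proof cases
    case 1
    have "a$3 * v$3 \<le> a$3 * 1" using curves_z_bounds[OF v(1)] 1 by (intro mult_left_mono) auto
    then have "b = a$3 * 1" using top v(2) by simp
    then have "{x. a \<bullet> x = b} = {x. x$3 = 1}" using \<open>a$3 \<noteq> 0\<close> by (simp add: inner)
    then show ?thesis using curves_Int_top by simp
  next
    case 2
    have "a$3 * v$3 \<le> a$3 * (-1)" using curves_z_bounds[OF v(1)] 2 by (intro mult_left_mono_neg) auto
    then have "b = a$3 * (-1)" using bottom v(2) by simp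
    then have "{x. a \<bullet> x = b} = {x. x$3 = -1}" using \<open>a$3 \<noteq> 0\<close> by (simp only: inner mult_cancel_left) simp
    then show ?thesis using curves_Int_bottom by simp
  qed
qed

lemma two_dimensional_face_of_setC:
  assumes F: "F face_of setC" and dim: "aff_dim F = 2"
  shows "F = face_alpha \<or> F = face_beta"
proof -
  have "F \<noteq> setC" using dim aff_dim_setC by auto
  moreover have "F \<noteq> {}" using dim by auto
  ultimately obtain a b where "a \<noteq> 0" and supp: "setC \<subseteq> {x. a \<bullet> x \<le> b}"
    and F_sub: "F \<subseteq> setC \<inter> {x. a \<bullet> x = b}"
    using face_of_subset_exposed_face[OF convex_setC F] by blast
  have curves_supp: "curves \<subseteq> {x. a \<bullet> x \<le> b}"
    using supp hull_subset[of curves convex] unfolding setC_eq_convex_hull_curves by blast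
  have E: "setC \<inter> {x. a \<bullet> x = b} = convex hull (curves \<inter> {x. a \<bullet> x = b})"
    unfolding setC_eq_convex_hull_curves
    by (rule convex_hull_Int_supporting_hyperplane[OF compact_curves curves_supp])
  have "2 \<le> aff_dim (curves \<inter> {x. a \<bullet> x = b})"
    using aff_dim_subset[OF F_sub] dim unfolding E aff_dim_convex_hull by simp
  then have "\<not> aff_dim (curves \<inter> {x. a \<bullet> x = b}) \<le> 1" "curves \<inter> {x. a \<bullet> x = b} \<noteq> {}" by auto
  then have "a$1 = 0" "a$2 = 0"
    using aff_dim_curves_contacts_le_1[of a b] curves_supp by auto
  then have "setC \<inter> {x. a \<bullet> x = b} = face_alpha \<or> setC \<inter> {x. a \<bullet> x = b} = face_beta"
    using curves_Int_horizontal_hyperplane[OF _ _ \<open>a \<noteq> 0\<close> curves_supp] \<open>curves \<inter> _ \<noteq> {}\<close>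
    unfolding E face_alpha_def face_beta_def by auto
  then show ?thesis
    using face_of_eq_if_aff_dim_eq[OF F F_sub] dim aff_dim_face_alpha aff_dim_face_beta
      face_alpha_subset_setC face_beta_subset_setC
    unfolding face_alpha_def face_beta_def by auto
qed

lemma exposed_face_alpha: "exposed_by_hyperplane face_alpha setC"
proof -
  have top: "{x. axis 3 1 \<bullet> x = 1} = {x :: real^3. x$3 = 1}" by (simp add: inner_axis')
  have "curves \<subseteq> {x. axis 3 1 \<bullet> x \<le> 1}" using curves_z_bounds by (auto simp: inner_axis')
  then show ?thesis
    using exposed_by_hyperplane_convex_hull_Int[OF compact_curves, of "axis 3 1" 1]
    unfolding face_alpha_def setC_eq_convex_hull_curves top curves_Int_top by (simp add: axis_eq_0_iff)
qed

lemma exposed_face_beta: "exposed_by_hyperplane face_beta setC"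
proof -
  have bottom: "{x. (- axis 3 1) \<bullet> x = 1} = {x :: real^3. x$3 = -1}" by (auto simp: inner_axis')
  have "curves \<subseteq> {x. (- axis 3 1) \<bullet> x \<le> 1}" using curves_z_bounds by (auto simp: inner_axis')
  then show ?thesis
    using exposed_by_hyperplane_convex_hull_Int[OF compact_curves, of "- axis 3 1" 1]
    unfolding face_beta_def setC_eq_convex_hull_curves bottom curves_Int_bottom by (simp add: axis_eq_0_iff)
qed

theorem proposition5p5:
  shows "(\<forall>F. (F face_of setC \<and> closed F \<and> aff_dim F = 2) \<longleftrightarrow> (F = face_alpha \<or> F = face_beta))
         \<and> exposed_by_hyperplane face_alpha setC \<and> exposed_by_hyperplane face_beta setC"
proof -
  have "F face_of setC \<and> closed F \<and> aff_dim F = 2" if "F = face_alpha \<or> F = face_beta" for F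
    using that exposed_face_alpha exposed_face_beta aff_dim_face_alpha aff_dim_face_beta
      face_of_imp_closed[OF convex_setC compact_imp_closed[OF compact_setC]]
    unfolding exposed_by_hyperplane_def by blast
  then show ?thesis using two_dimensional_face_of_setC exposed_face_alpha exposed_face_beta by blast
qed

end
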